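(* If $\mathcal C$ is a Baker class, then $\mathcal C^{(d)}$ is a Baker class for every integer $d\ge1$.
   Context: A layering of a graph $G$ is a function $\lambda:V(G)\to\mathbb{Z}$ with $|\lambda(u)-\lambda(v)|\le1$ for every edge $uv$; its width is $\sup_{i\in\mathbb Z}|\lambda^{-1}(i)|$. For $P\subseteq V(G)$, a layering $\lambda$ of $G[P]$ is $G$-geodesic if $d_G(x,y)\ge|\lambda(x)-\lambda(y)|$ for all $x,y\in P$ ($d_G$ the distance in $G$, $\infty$ between different components). An ordered graph is a finite graph with a linear ordering of its vertices; subgraphs inherit the restricted ordering. For an infinite sequence $\mathbf r=r_1,r_2,\dots$ of positive integers and an integer $s\ge0$, let $\mathrm{tail}_s(\mathbf r)=r_{s+1},r_{s+2},\dots$, $\mathrm{tail}(\mathbf r)=\mathrm{tail}_1(\mathbf r)$ and $\mathrm{head}(\mathbf r)=r_1$. The Baker game between Destroyer and Preserver has states $(G,\mathbf r)$ with $G$ an ordered graph and $\mathbf r$ an infinite sequence of positive integers. If $V(G)=\emptyset$ the game stops. Otherwise, in one round Destroyer chooses either Delete (the smallest vertex $v$ of $G$ is removed and the game proceeds to $(G-v,\mathrm{tail}(\mathbf r))$) or Restrict (Destroyer chooses a layering $\lambda$ of $G$, Preserver chooses an interval $I$ of at most $\mathrm{head}(\mathbf r)$ consecutive integers, and the game proceeds to $(G[\lambda^{-1}(I)],\mathrm{tail}(\mathbf r))$). Destroyer wins on $(G,\mathbf r)$ in $t$ rounds if he has a strategy such that, regardless of Preserver's choices, the game stops after at most $t$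 rounds. A class $\mathcal C$ of ordered graphs is a Baker class if for every infinite sequence $\mathbf r$ of positive integers there is an integer $t$ such that for every $G\in\mathcal C$, Destroyer wins the Baker game on $(G,\mathbf r)$ in $t$ rounds. A partition $\mathcal P$ of an ordered graph $G$ (ordering $\prec$) is a sequence $P_1,\dots,P_m$ of pairwise disjoint sets with union $V(G)$ such that $u\prec v$ whenever $u\in P_i$, $v\in P_j$, $i<j$. It is width-$d$ geodesic if for each $i\in\{1,\dots,m\}$, $G[P_i]$ has a $G[P_i\cup P_{i+1}\cup\dots\cup P_m]$-geodesic layering of width at most $d$. $G/\mathcal P$ is the ordered graph obtained from $G$ by identifying the vertices of each part into a single vertex and suppressing loops and parallel edges, with vertices ordered as the sequence of parts. $\mathcal C^{(d)}$ is the class of ordered graphs $G$ having a width-$d$ geodesic partition $\mathcal P$ with $G/\mathcal P\in\mathcal C$. *)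

theory Defs
  imports "HOL-Library.Extended_Nat"
begin

text \<open>Ordered graphs: finite vertex set of naturals (ordered by the natural order
  on nat) and a set of 2-element edges inside the vertex set.\<close>
type_synonym ograph = "nat set \<times> nat set set"

definition verts :: "ograph \<Rightarrow> nat set" where "verts G = fst G"
definition edges :: "ograph \<Rightarrow> nat set set" where "edges G = snd G"

definition is_ograph :: "ograph \<Rightarrow> bool" where
  "is_ograph G \<longleftrightarrow> finite (verts G) \<and>
     (\<forall>e\<in>edges G. \<exists>u v. u \<noteq> v \<and> e = {u, v} \<and> u \<in> verts G \<and> v \<in> verts G)"

definition induced :: "ograph \<Rightarrow> nat set \<Rightarrow> ograph" where
  "induced G S = (verts G \<inter> S, {e \<in> edges G. e \<subseteq> S})"

definition delete_min :: "ograph \<Rightarrow> ograph" where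
  "delete_min G = (verts G - {Min (verts G)}, {e \<in> edges G. Min (verts G) \<notin> e})"

definition is_layering :: "ograph \<Rightarrow> (nat \<Rightarrow> int) \<Rightarrow> bool" where
  "is_layering G L \<longleftrightarrow> (\<forall>u v. {u, v} \<in> edges G \<longrightarrow> \<bar>L u - L v\<bar> \<le> 1)"

definition layering_width_le :: "ograph \<Rightarrow> (nat \<Rightarrow> int) \<Rightarrow> nat \<Rightarrow> bool" where
  "layering_width_le G L d \<longleftrightarrow> (\<forall>i::int. card {v \<in> verts G. L v = i} \<le> d)"

definition adj :: "ograph \<Rightarrow> (nat \<times> nat) set" where
  "adj G = {(u, v). {u, v} \<in> edges G}"

definition gdist :: "ograph \<Rightarrow> nat \<Rightarrow> nat \<Rightarrow> enat" where
  "gdist G x y = (if \<exists>k. (x, y) \<in> (adj G) ^^ k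
                  then enat (LEAST k. (x, y) \<in> (adj G) ^^ k) else \<infinity>)"

definition geodesic_layering :: "ograph \<Rightarrow> nat set \<Rightarrow> (nat \<Rightarrow> int) \<Rightarrow> bool" where
  "geodesic_layering H P L \<longleftrightarrow> is_layering (induced H P) L \<and>
     (\<forall>x\<in>P. \<forall>y\<in>P. enat (nat \<bar>L x - L y\<bar>) \<le> gdist H x y)"

definition tail :: "(nat \<Rightarrow> nat) \<Rightarrow> nat \<Rightarrow> nat" where
  "tail r = (\<lambda>i. r (Suc i))"

definition head :: "(nat \<Rightarrow> nat) \<Rightarrow> nat" where
  "head r = r 0"

primrec destroyer_wins :: "nat \<Rightarrow> ograph \<Rightarrow> (nat \<Rightarrow> nat) \<Rightarrow> bool" where
  "destroyer_wins 0 G r \<longleftrightarrow> verts G = {}"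
| "destroyer_wins (Suc t) G r \<longleftrightarrow> verts G = {} \<or>
     destroyer_wins t (delete_min G) (tail r) \<or>
     (\<exists>L. is_layering G L \<and>
        (\<forall>a::int. \<forall>k::nat. k \<le> head r \<longrightarrow>
           destroyer_wins t (induced G {v. L v \<in> {a..<a + int k}}) (tail r)))"

definition baker_class :: "ograph set \<Rightarrow> bool" where
  "baker_class C \<longleftrightarrow> (\<forall>r::nat \<Rightarrow> nat. (\<forall>i. 0 < r i) \<longrightarrow>
      (\<exists>t. \<forall>G\<in>C. destroyer_wins t G r))"

definition is_partition :: "ograph \<Rightarrow> nat set list \<Rightarrow> bool" where
  "is_partition G P \<longleftrightarrow> (\<forall>i<length P. P ! i \<noteq> {}) \<and>
     (\<forall>i<length P. \<forall>j<length P. i \<noteq> j \<longrightarrow> P ! i \<inter> P ! j = {}) \<and>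
     \<Union> (set P) = verts G \<and>
     (\<forall>i j u v. i < j \<and> j < length P \<and> u \<in> P ! i \<and> v \<in> P ! j \<longrightarrow> u < v)"

definition geodesic_partition :: "nat \<Rightarrow> ograph \<Rightarrow> nat set list \<Rightarrow> bool" where
  "geodesic_partition d G P \<longleftrightarrow> is_partition G P \<and>
     (\<forall>i<length P. \<exists>L.
        geodesic_layering (induced G (\<Union>j\<in>{i..<length P}. P ! j)) (P ! i) L \<and>
        layering_width_le (induced G (P ! i)) L d)"

definition quotient :: "ograph \<Rightarrow> nat set list \<Rightarrow> ograph" where
  "quotient G P = ({0..<length P},
     {{i, j} | i j. i < length P \<and> j < length P \<and> i \<noteq> j \<and>
        (\<exists>u\<in>P ! i. \<exists>v\<in>P ! j. {u, v} \<in> edges G)})"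

definition ord_iso :: "ograph \<Rightarrow> ograph \<Rightarrow> bool" where
  "ord_iso G H \<longleftrightarrow> (\<exists>f. bij_betw f (verts G) (verts H) \<and> strict_mono_on (verts G) f \<and>
     (\<forall>u\<in>verts G. \<forall>v\<in>verts G. {u, v} \<in> edges G \<longleftrightarrow> {f u, f v} \<in> edges H))"

text \<open>C^(d); G/P is compared with members of C up to order-isomorphism\<close>
definition geo_closure :: "ograph set \<Rightarrow> nat \<Rightarrow> ograph set" where
  "geo_closure C d = {G. is_ograph G \<and>
     (\<exists>P. geodesic_partition d G P \<and> (\<exists>H\<in>C. ord_iso (quotient G P) H))}"

end

theory Submission
  imports Defs
begin

text \<open>Destroyer plays on \<open>G\<close> by simulating a winning strategy for the quotient \<open>H = G/\<P>\<close>,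
  transported along the map \<open>\<phi>\<close> sending each vertex to its part. A restriction in \<open>H\<close> by a
  layering \<open>\<lambda>\<close> is answered by the layering \<open>\<lambda> \<circ> \<phi>\<close> of \<open>G\<close>. A deletion of the first vertex of
  \<open>H\<close> is answered by a layering of \<open>G\<close> extending the width-\<open>d\<close> layering of the first part,
  which exists because that layering is geodesic: whatever window of at most \<open>r\<close> layers
  Preserver keeps contains at most \<open>d r\<close> vertices of that part, and they are the smallest ones,
  so \<open>d r\<close> further deletions remove them. Hence
  Destroyer wins on \<open>C^(d)\<close> against \<open>r\<close> with the bound for \<open>C\<close> against a suitably thinned-out
  sequence.\<close>

section \<open>Ordered graphs\<close>

lemma verts_induced [simp]: "verts (induced G S) = verts G \<inter> S"
  by (simp add: induced_def verts_def)

lemma edges_induced [simp]: "edges (induced G S) = {e \<in> edges G. e \<subseteq> S}"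
  by (simp add: induced_def edges_def)

lemma induced_induced: "induced (induced G A) B = induced G (A \<inter> B)"
  unfolding induced_def verts_def edges_def by auto

lemma induced_UNIV: "induced G UNIV = G"
  unfolding induced_def verts_def edges_def by simp

lemma delete_min_eq_induced: "delete_min G = induced G (- {Min (verts G)})"
  unfolding delete_min_def induced_def by auto

lemma is_ograph_edge_subset: "is_ograph G \<Longrightarrow> e \<in> edges G \<Longrightarrow> e \<subseteq> verts G"
  unfolding is_ograph_def by fastforce

lemma is_ograph_edge_verts: "is_ograph G \<Longrightarrow> {u, v} \<in> edges G \<Longrightarrow> u \<in> verts G \<and> v \<in> verts G"
  using is_ograph_edge_subset by blast

lemma is_ograph_finite: "is_ograph G \<Longrightarrow> finite (verts G)"
  unfolding is_ograph_def by blast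

lemma is_ograph_induced: "is_ograph G \<Longrightarrow> is_ograph (induced G S)"
  unfolding is_ograph_def by fastforce

lemma induced_cong:
  assumes "is_ograph G" "verts G \<inter> S = verts G \<inter> T"
  shows "induced G S = induced G T"
proof -
  have "{e \<in> edges G. e \<subseteq> S} = {e \<in> edges G. e \<subseteq> T}"
    using is_ograph_edge_subset[OF assms(1)] assms(2) by blast
  then show ?thesis using assms(2) unfolding induced_def by simp
qed

lemma induced_superset: "is_ograph G \<Longrightarrow> verts G \<subseteq> S \<Longrightarrow> induced G S = G"
  using induced_cong[of G S UNIV] by (simp add: Int_absorb2 induced_UNIV)

section \<open>The Baker game\<close>

lemma destroyer_wins_empty: "verts G = {} \<Longrightarrow> destroyer_wins n G r"
  by (cases n) auto

text \<open>Restricting to the single layer of a constant layering is a wasted round.\<close>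
lemma destroyer_wins_Suc_skip:
  assumes "destroyer_wins n G (tail r)"
  shows "destroyer_wins (Suc n) G r"
proof -
  have "destroyer_wins n (induced G {v. (0::int) \<in> {a..<a + int k}}) (tail r)" for a k
    by (cases "(0::int) \<in> {a..<a + int k}") (simp_all add: induced_UNIV assms destroyer_wins_empty)
  moreover have "is_layering G (\<lambda>_. 0)" by (simp add: is_layering_def)
  ultimately show ?thesis by fastforce
qed

lemma destroyer_wins_skip:
  "destroyer_wins n G (\<lambda>i. r (i + m)) \<Longrightarrow> destroyer_wins (m + n) G r"
proof (induction m arbitrary: r)
  case (Suc m)
  have "(\<lambda>i. r (i + Suc m)) = (\<lambda>i. tail r (i + m))" by (simp add: tail_def)
  then show ?case using Suc destroyer_wins_Suc_skip by simp
qed simp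

lemma destroyer_wins_delete_initial:
  assumes "finite (verts G)" "X \<subseteq> verts G" "\<forall>x\<in>X. \<forall>y\<in>verts G - X. x < y"
    and "destroyer_wins n (induced G (- X)) (\<lambda>i. r (i + card X))"
  shows "destroyer_wins (card X + n) G r"
  using assms
proof (induction "card X" arbitrary: G X r)
  case 0
  then have "X = {}" using finite_subset card_0_eq by metis
  then show ?case using 0 by (simp add: induced_UNIV)
next
  case (Suc c)
  define m where "m = Min (verts G)"
  have X: "finite X" "X \<noteq> {}" using Suc finite_subset by fastforce+
  have "m \<in> X"
  proof (rule ccontr)
    assume "m \<notin> X"
    obtain x where "x \<in> X" using X by blast
    moreover have "verts G \<noteq> {}" using X Suc.prems(2) by blast
    then have "m \<in> verts G" "\<forall>y\<in>verts G. m \<le> y" unfolding m_def using Suc.prems(1) by auto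
    ultimately show False using Suc.prems(2,3) \<open>m \<notin> X\<close> by (meson DiffI leD subsetD)
  qed
  define X' where "X' = X - {m}"
  have cX: "card X = Suc (card X')" unfolding X'_def using X \<open>m \<in> X\<close> by (simp add: card_gt_0_iff)
  have dm: "delete_min G = induced G (- {m})" unfolding m_def by (rule delete_min_eq_induced)
  have "destroyer_wins (card X' + n) (delete_min G) (tail r)"
  proof (rule Suc.hyps(1))
    show "c = card X'" using cX Suc.hyps(2) by simp
    show "finite (verts (delete_min G))" "X' \<subseteq> verts (delete_min G)"
      "\<forall>x\<in>X'. \<forall>y\<in>verts (delete_min G) - X'. x < y"
      using Suc.prems dm unfolding X'_def by auto
    have "- {m} \<inter> - X' = - X" unfolding X'_def using \<open>m \<in> X\<close> by auto
    then have "induced (delete_min G) (- X') = induced G (- X)"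
      unfolding dm induced_induced by simp
    then show "destroyer_wins n (induced (delete_min G) (- X')) (\<lambda>i. tail r (i + card X'))"
      using Suc.prems(4) cX by (simp add: tail_def)
  qed
  then show ?case using cX by simp
qed

section \<open>Geodesic layerings\<close>

lemma relpow_mono: "(R :: 'a rel) \<subseteq> S \<Longrightarrow> R ^^ k \<subseteq> S ^^ k"
  by (induction k) (simp_all add: relcomp_mono)

lemma gdist_le_relpow: "(x, y) \<in> adj G ^^ k \<Longrightarrow> gdist G x y \<le> enat k"
  unfolding gdist_def by (auto intro: Least_le)

lemma gdist_antimono:
  assumes "edges G' \<subseteq> edges G"
  shows "gdist G x y \<le> gdist G' x y"
proof (cases "\<exists>k. (x, y) \<in> adj G' ^^ k")
  case True
  define k where "k = (LEAST k. (x, y) \<in> adj G' ^^ k)"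
  have "(x, y) \<in> adj G' ^^ k" unfolding k_def using True by (rule LeastI_ex)
  moreover have "adj G' \<subseteq> adj G" using assms unfolding adj_def by auto
  ultimately have "(x, y) \<in> adj G ^^ k" using relpow_mono by blast
  moreover have "gdist G' x y = enat k" unfolding gdist_def k_def using True by simp
  ultimately show ?thesis using gdist_le_relpow by simp
qed (simp add: gdist_def)

lemma geodesic_layering_antimono:
  assumes "geodesic_layering H P L" "edges H' \<subseteq> edges H" "P' \<subseteq> P"
  shows "geodesic_layering H' P' L"
proof -
  have "is_layering (induced H' P') L"
    using assms unfolding geodesic_layering_def is_layering_def by fastforce
  moreover have "enat (nat \<bar>L x - L y\<bar>) \<le> gdist H' x y" if "x \<in> P'" "y \<in> P'" for x y
    using assms that gdist_antimono[OF assms(2), of x y] order_trans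
    unfolding geodesic_layering_def by blast
  ultimately show ?thesis unfolding geodesic_layering_def by blast
qed

lemma layering_width_le_subgraph:
  assumes "layering_width_le G L d" "finite (verts G)" "verts G' \<subseteq> verts G"
  shows "layering_width_le G' L d"
  unfolding layering_width_le_def
proof
  fix i
  have "card {v \<in> verts G'. L v = i} \<le> card {v \<in> verts G. L v = i}"
    using assms(2,3) by (intro card_mono) auto
  then show "card {v \<in> verts G'. L v = i} \<le> d"
    using assms(1) unfolding layering_width_le_def by (meson order_trans)
qed

lemma card_layers_interval_le:
  assumes "layering_width_le G L d" "finite (verts G)"
  shows "card {v \<in> verts G. L v \<in> {a..<a + int k}} \<le> k * d"
proof -
  have "{v \<in> verts G. L v \<in> {a..<a + int k}} = (\<Union>i\<in>{a..<a + int k}. {v \<in> verts G. L v = i})"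
    by auto
  then have "card {v \<in> verts G. L v \<in> {a..<a + int k}} \<le> (\<Sum>i\<in>{a..<a + int k}. card {v \<in> verts G. L v = i})"
    using card_UN_le[of "{a..<a + int k}"] by simp
  also have "\<dots> \<le> card {a..<a + int k} * d"
    using assms(1) sum_bounded_above[of "{a..<a + int k}" "\<lambda>i. card {v \<in> verts G. L v = i}" d]
    unfolding layering_width_le_def by simp
  finally show ?thesis by simp
qed

lemma is_layering_Least_level:
  assumes step: "\<And>u v n. {u, v} \<in> edges G \<Longrightarrow> W u n \<Longrightarrow> W v (Suc n)"
  shows "is_layering G (\<lambda>v. if \<exists>n. W v n then c + int (LEAST n. W v n) else 0)"
  unfolding is_layering_def
proof (intro allI impI)
  fix u v assume e: "{u, v} \<in> edges G"
  then have e': "{v, u} \<in> edges G" by (simp add: insert_commute)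
  show "\<bar>(if \<exists>n. W u n then c + int (LEAST n. W u n) else 0)
         - (if \<exists>n. W v n then c + int (LEAST n. W v n) else 0)\<bar> \<le> 1"
  proof (cases "\<exists>n. W u n")
    case True
    then have Tv: "\<exists>n. W v n" using step[OF e] by blast
    have "W u (LEAST n. W u n)" "W v (LEAST n. W v n)" using True Tv by (auto intro: LeastI_ex)
    then have "(LEAST n. W v n) \<le> Suc (LEAST n. W u n)" "(LEAST n. W u n) \<le> Suc (LEAST n. W v n)"
      using step[OF e] step[OF e'] by (auto intro: Least_le)
    then show ?thesis using True Tv by simp
  next
    case False
    then have "\<not> (\<exists>n. W v n)" using step[OF e'] by blast
    then show ?thesis using False by simp
  qed
qed

text \<open>The extension is a distance from \<open>F\<close>, where each \<open>x \<in> F\<close> starts at height \<open>L0 x\<close>;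
  geodesicity says that no \<open>x\<close> undercuts \<open>L0\<close> at another point of \<open>F\<close>.\<close>
lemma geodesic_layering_extend:
  assumes "finite F" and geo: "\<forall>x\<in>F. \<forall>y\<in>F. enat (nat \<bar>L0 x - L0 y\<bar>) \<le> gdist G x y"
  shows "\<exists>L. is_layering G L \<and> (\<forall>v\<in>F. L v = L0 v)"
proof -
  define c where "c = Min (L0 ` F)"
  define W where "W v n \<longleftrightarrow> (\<exists>x\<in>F. \<exists>k. (x, v) \<in> adj G ^^ k \<and> n = nat (L0 x - c) + k)" for v n
  define L where "L v = (if \<exists>n. W v n then c + int (LEAST n. W v n) else 0)" for v
  have "is_layering G L"
    unfolding L_def
  proof (rule is_layering_Least_level)
    fix u v n assume "{u, v} \<in> edges G" "W u n"
    then have "(u, v) \<in> adj G" unfolding adj_def by simp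
    moreover obtain x k where "x \<in> F" "(x, u) \<in> adj G ^^ k" "n = nat (L0 x - c) + k"
      using \<open>W u n\<close> unfolding W_def by blast
    ultimately show "W v (Suc n)" unfolding W_def by (metis add_Suc_right relpow_Suc_I)
  qed
  moreover have "L v = L0 v" if v: "v \<in> F" for v
  proof -
    have c: "c \<le> L0 x" if "x \<in> F" for x unfolding c_def using assms(1) that by simp
    have Wv: "W v (nat (L0 v - c))" unfolding W_def using v by (intro bexI[of _ v] exI[of _ 0]) auto
    have "(LEAST n. W v n) = nat (L0 v - c)"
    proof (rule Least_equality)
      fix n assume "W v n"
      then obtain x k where x: "x \<in> F" "(x, v) \<in> adj G ^^ k" "n = nat (L0 x - c) + k"
        unfolding W_def by blast
      have "enat (nat \<bar>L0 x - L0 v\<bar>) \<le> enat k"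
        using geo x(1) v gdist_le_relpow[OF x(2)] order_trans by blast
      then show "nat (L0 v - c) \<le> n" using x(3) c[OF x(1)] c[OF v] by simp
    qed (rule Wv)
    then show ?thesis unfolding L_def using Wv c[OF v] by auto
  qed
  ultimately show ?thesis by blast
qed

section \<open>Simulating the game along a geodesic fibration\<close>

text \<open>\<open>\<phi>\<close> abstracts the projection of \<open>G\<close> onto \<open>G/\<P>\<close>; its fibres play the parts of a
  width-\<open>d\<close> geodesic partition.\<close>
definition geodesic_fibration :: "nat \<Rightarrow> (nat \<Rightarrow> nat) \<Rightarrow> ograph \<Rightarrow> ograph \<Rightarrow> bool" where
  "geodesic_fibration d \<phi> G H \<longleftrightarrow> \<phi> ` verts G \<subseteq> verts H \<and>
     (\<forall>u\<in>verts G. \<forall>v\<in>verts G. u < v \<longrightarrow> \<phi> u \<le> \<phi> v) \<and>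
     (\<forall>u v. {u, v} \<in> edges G \<longrightarrow> \<phi> u \<noteq> \<phi> v \<longrightarrow> {\<phi> u, \<phi> v} \<in> edges H) \<and>
     (\<forall>h. \<exists>L. geodesic_layering (induced G {v. h \<le> \<phi> v}) {v \<in> verts G. \<phi> v = h} L \<and>
            layering_width_le (induced G {v. \<phi> v = h}) L d)"

lemma geodesic_fibration_induced:
  assumes fib: "geodesic_fibration d \<phi> G H" and og: "is_ograph G"
  shows "geodesic_fibration d \<phi> (induced G S) H"
  unfolding geodesic_fibration_def
proof (intro conjI allI)
  show "\<phi> ` verts (induced G S) \<subseteq> verts H"
    "\<forall>u\<in>verts (induced G S). \<forall>v\<in>verts (induced G S). u < v \<longrightarrow> \<phi> u \<le> \<phi> v"
    "\<And>u v. {u, v} \<in> edges (induced G S) \<longrightarrow> \<phi> u \<noteq> \<phi> v \<longrightarrow> {\<phi> u, \<phi> v} \<in> edges H"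
    using fib unfolding geodesic_fibration_def by auto
next
  fix h
  obtain L where "geodesic_layering (induced G {v. h \<le> \<phi> v}) {v \<in> verts G. \<phi> v = h} L"
    and "layering_width_le (induced G {v. \<phi> v = h}) L d"
    using fib unfolding geodesic_fibration_def by blast
  then have "geodesic_layering (induced (induced G S) {v. h \<le> \<phi> v}) {v \<in> verts (induced G S). \<phi> v = h} L"
    and "layering_width_le (induced (induced G S) {v. \<phi> v = h}) L d"
    using is_ograph_finite[OF og]
    by (auto intro: geodesic_layering_antimono layering_width_le_subgraph)
  then show "\<exists>L. geodesic_layering (induced (induced G S) {v. h \<le> \<phi> v}) {v \<in> verts (induced G S). \<phi> v = h} L \<and>
      layering_width_le (induced (induced G S) {v. \<phi> v = h}) L d" by blast
qed

lemma geodesic_fibration_retarget: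
  assumes "geodesic_fibration d \<phi> G H" "\<phi> ` verts G \<subseteq> verts H'"
    and "\<And>u v. {u, v} \<in> edges G \<Longrightarrow> \<phi> u \<noteq> \<phi> v \<Longrightarrow> {\<phi> u, \<phi> v} \<in> edges H'"
  shows "geodesic_fibration d \<phi> G H'"
  using assms unfolding geodesic_fibration_def by blast

lemma geodesic_fibration_delete_min:
  assumes fib: "geodesic_fibration d \<phi> G H" and og: "is_ograph G"
    and "\<forall>v\<in>verts G. \<phi> v \<noteq> Min (verts H)"
  shows "geodesic_fibration d \<phi> G (delete_min H)"
proof (rule geodesic_fibration_retarget[OF fib])
  show "\<phi> ` verts G \<subseteq> verts (delete_min H)"
    using fib assms(3) unfolding geodesic_fibration_def delete_min_def verts_def by auto
  fix u v assume "{u, v} \<in> edges G" "\<phi> u \<noteq> \<phi> v"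
  then show "{\<phi> u, \<phi> v} \<in> edges (delete_min H)"
    using fib assms(3) is_ograph_edge_verts[OF og]
    unfolding geodesic_fibration_def delete_min_def edges_def by auto
qed

lemma geodesic_fibration_restrict:
  assumes fib: "geodesic_fibration d \<phi> G H" and og: "is_ograph G"
  shows "geodesic_fibration d \<phi> (induced G {v. Lh (\<phi> v) \<in> I}) (induced H {h. Lh h \<in> I})"
  by (rule geodesic_fibration_retarget[OF geodesic_fibration_induced[OF fib og]])
    (use fib in \<open>auto simp: geodesic_fibration_def\<close>)

lemma is_layering_geodesic_fibration:
  assumes "geodesic_fibration d \<phi> G H" "is_layering H Lh"
  shows "is_layering G (\<lambda>v. Lh (\<phi> v))"
  using assms unfolding geodesic_fibration_def is_layering_def by (metis abs_zero diff_self zero_le_one)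

lemma geodesic_fibration_min_fibre_initial:
  assumes fib: "geodesic_fibration d \<phi> G H" and "finite (verts H)"
    and x: "x \<in> verts G" "\<phi> x = Min (verts H)" and y: "y \<in> verts G" "\<phi> y \<noteq> Min (verts H)"
  shows "x < y"
proof -
  have "\<phi> y \<in> verts H" using fib y(1) unfolding geodesic_fibration_def by blast
  then have "\<phi> x < \<phi> y" using assms(2) x(2) y(2) by (simp add: order_less_le)
  moreover have "\<phi> y \<le> \<phi> x" if "y < x" using fib x(1) y(1) that unfolding geodesic_fibration_def by blast
  ultimately show ?thesis using \<open>\<phi> y \<noteq> Min (verts H)\<close> x(2) by (metis leD linorder_neqE_nat)
qed

lemma destroyer_wins_delete_min_fibre:
  assumes og: "is_ograph G" and finH: "finite (verts H)" and fib: "geodesic_fibration d \<phi> G H"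
    and card: "card {v \<in> verts G. \<phi> v = Min (verts H)} \<le> m"
    and rest: "\<And>G'. is_ograph G' \<Longrightarrow> geodesic_fibration d \<phi> G' (delete_min H) \<Longrightarrow>
      destroyer_wins n G' (\<lambda>i. r (i + m))"
  shows "destroyer_wins (m + n) G r"
proof -
  define X where "X = {v \<in> verts G. \<phi> v = Min (verts H)}"
  have "geodesic_fibration d \<phi> (induced G (- X)) (delete_min H)"
    using geodesic_fibration_delete_min[OF geodesic_fibration_induced[OF fib og]]
      is_ograph_induced[OF og] unfolding X_def by auto
  then have "destroyer_wins n (induced G (- X)) (\<lambda>i. r (i + (m - card X) + card X))"
    using rest is_ograph_induced[OF og] card unfolding X_def by (simp add: add.assoc)
  then have "destroyer_wins ((m - card X) + n) (induced G (- X)) (\<lambda>i. r (i + card X))"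
    by (rule destroyer_wins_skip)
  moreover have "\<forall>x\<in>X. \<forall>y\<in>verts G - X. x < y"
    using geodesic_fibration_min_fibre_initial[OF fib finH] unfolding X_def by blast
  ultimately have "destroyer_wins (card X + ((m - card X) + n)) G r"
    using is_ograph_finite[OF og] unfolding X_def by (intro destroyer_wins_delete_initial) auto
  then show ?thesis using card unfolding X_def by simp
qed

lemma destroyer_wins_simulate_delete_min:
  assumes og: "is_ograph G" and finH: "finite (verts H)" and fib: "geodesic_fibration d \<phi> G H"
    and rest: "\<And>G'. is_ograph G' \<Longrightarrow> geodesic_fibration d \<phi> G' (delete_min H) \<Longrightarrow>
      destroyer_wins n G' (\<lambda>i. r (i + Suc (d * r 0)))"
  shows "destroyer_wins (Suc (d * r 0 + n)) G r"
proof -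
  define h0 where "h0 = Min (verts H)"
  define F where "F = {v \<in> verts G. \<phi> v = h0}"
  obtain L0 where geo: "geodesic_layering (induced G {v. h0 \<le> \<phi> v}) F L0"
    and width: "layering_width_le (induced G {v. \<phi> v = h0}) L0 d"
    using fib unfolding geodesic_fibration_def F_def by blast
  have "induced G {v. h0 \<le> \<phi> v} = G"
    using og fib finH unfolding geodesic_fibration_def h0_def by (intro induced_superset) auto
  then obtain L where lay: "is_layering G L" and L: "\<forall>v\<in>F. L v = L0 v"
    using geodesic_layering_extend[of F L0 G] is_ograph_finite[OF og] geo
    unfolding geodesic_layering_def F_def by auto
  \<comment> \<open>a window of \<open>k\<close> layers of \<open>L\<close> meets the fibre over \<open>h0\<close> in at most \<open>k * d\<close> vertices\<close>
  have "destroyer_wins (d * r 0 + n) (induced G {v. L v \<in> {a..<a + int k}}) (tail r)"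
    if k: "k \<le> head r" for a k
  proof (rule destroyer_wins_delete_min_fibre[OF is_ograph_induced[OF og] finH
        geodesic_fibration_induced[OF fib og]])
    have fin: "finite (verts (induced G {v. \<phi> v = h0}))" using is_ograph_finite[OF og] by simp
    have "{v \<in> verts (induced G {v. L v \<in> {a..<a + int k}}). \<phi> v = h0}
        \<subseteq> {v \<in> verts (induced G {v. \<phi> v = h0}). L0 v \<in> {a..<a + int k}}"
      using L unfolding F_def by auto
    then have "card {v \<in> verts (induced G {v. L v \<in> {a..<a + int k}}). \<phi> v = h0}
        \<le> card {v \<in> verts (induced G {v. \<phi> v = h0}). L0 v \<in> {a..<a + int k}}"
      using fin by (intro card_mono) (auto intro: rev_finite_subset)
    also have "\<dots> \<le> k * d" by (rule card_layers_interval_le[OF width fin])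
    also have "\<dots> \<le> d * r 0" using k unfolding head_def by (simp add: mult.commute)
    finally show "card {v \<in> verts (induced G {v. L v \<in> {a..<a + int k}}). \<phi> v = Min (verts H)} \<le> d * r 0"
      unfolding h0_def .
  qed (use rest in \<open>simp add: tail_def\<close>)
  then show ?thesis using lay by auto
qed

lemma destroyer_wins_simulate_restrict:
  assumes og: "is_ograph G" and fib: "geodesic_fibration d \<phi> G H" and layH: "is_layering H Lh"
    and rest: "\<And>a k G'. k \<le> r 0 \<Longrightarrow> is_ograph G' \<Longrightarrow>
      geodesic_fibration d \<phi> G' (induced H {h. Lh h \<in> {a..<a + int k}}) \<Longrightarrow>
      destroyer_wins n G' (\<lambda>i. r (i + Suc (d * r 0)))"
  shows "destroyer_wins (Suc (d * r 0 + n)) G r"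
proof -
  have "destroyer_wins (d * r 0 + n) (induced G {v. Lh (\<phi> v) \<in> {a..<a + int k}}) (tail r)"
    if "k \<le> head r" for a k
    using rest[OF _ is_ograph_induced[OF og] geodesic_fibration_restrict[OF fib og]] that
    by (intro destroyer_wins_skip) (simp add: head_def tail_def)
  then show ?thesis using is_layering_geodesic_fibration[OF fib layH] by auto
qed

text \<open>A round in the quotient is played as one round in \<open>G\<close> followed by \<open>d * r 0\<close> further
  rounds, which suffice to delete what survives of a fibre of width \<open>d\<close> in \<open>r 0\<close> layers.\<close>
primrec simulation_rounds :: "nat \<Rightarrow> nat \<Rightarrow> (nat \<Rightarrow> nat) \<Rightarrow> nat" where
  "simulation_rounds d 0 r = 0"
| "simulation_rounds d (Suc t) r =
     Suc (d * r 0) + simulation_rounds d t (\<lambda>i. r (i + Suc (d * r 0)))"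

definition simulation_seq :: "nat \<Rightarrow> (nat \<Rightarrow> nat) \<Rightarrow> nat \<Rightarrow> nat" where
  "simulation_seq d r = (\<lambda>j. r (simulation_rounds d j r))"

lemma head_simulation_seq: "head (simulation_seq d r) = r 0"
  by (simp add: head_def simulation_seq_def)

lemma tail_simulation_seq:
  "tail (simulation_seq d r) = simulation_seq d (\<lambda>i. r (i + Suc (d * r 0)))"
  by (simp add: tail_def simulation_seq_def add.commute)

lemma destroyer_wins_simulation:
  assumes "destroyer_wins t H (simulation_seq d r)" "is_ograph G" "finite (verts H)"
    "geodesic_fibration d \<phi> G H"
  shows "destroyer_wins (simulation_rounds d t r) G r"
  using assms
proof (induction t arbitrary: H r G)
  case 0
  then show ?case using destroyer_wins_empty unfolding geodesic_fibration_def by auto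
next
  case (Suc t)
  define s where "s = (\<lambda>i. r (i + Suc (d * r 0)))"
  have rounds: "simulation_rounds d (Suc t) r = Suc (d * r 0 + simulation_rounds d t s)"
    by (simp add: s_def)
  have fin: "finite (verts (induced H S))" "finite (verts (delete_min H))" for S
    using Suc.prems(3) by (simp_all add: delete_min_eq_induced)
  consider "verts H = {}" | "destroyer_wins t (delete_min H) (simulation_seq d s)"
    | Lh where "is_layering H Lh" "\<And>a k. k \<le> r 0 \<Longrightarrow>
        destroyer_wins t (induced H {h. Lh h \<in> {a..<a + int k}}) (simulation_seq d s)"
    using Suc.prems(1) by (auto simp: head_simulation_seq tail_simulation_seq s_def)
  then show ?case
  proof cases
    case 1
    then show ?thesis using Suc.prems(4) destroyer_wins_empty unfolding geodesic_fibration_def by auto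
  next
    case 2
    show ?thesis unfolding rounds
      using Suc.IH[OF 2 _ fin(2)] Suc.prems(2-4) unfolding s_def
      by (intro destroyer_wins_simulate_delete_min) auto
  next
    case 3
    show ?thesis unfolding rounds
      using Suc.IH[OF 3(2) _ fin(1)] Suc.prems(2,4) 3(1) unfolding s_def
      by (intro destroyer_wins_simulate_restrict) auto
  qed
qed

section \<open>Geodesic partitions\<close>

definition part_index :: "nat set list \<Rightarrow> nat \<Rightarrow> nat" where
  "part_index P v = (THE i. i < length P \<and> v \<in> P ! i)"

lemma part_index_eq:
  assumes "is_partition G P" "i < length P" "v \<in> P ! i"
  shows "part_index P v = i"
  unfolding part_index_def
proof (rule the_equality)
  fix j assume "j < length P \<and> v \<in> P ! j"
  then show "j = i" using assms unfolding is_partition_def by blast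
qed (use assms in simp)

lemma part_index:
  assumes "is_partition G P" "v \<in> verts G"
  shows "part_index P v < length P" "v \<in> P ! part_index P v"
proof -
  obtain i where "i < length P" "v \<in> P ! i"
    using assms unfolding is_partition_def by (metis UnionE in_set_conv_nth)
  then show "part_index P v < length P" "v \<in> P ! part_index P v"
    using part_index_eq[OF assms(1)] by simp_all
qed

lemma is_partition_less:
  assumes "is_partition G P" "i < j" "j < length P" "u \<in> P ! i" "v \<in> P ! j"
  shows "u < v"
proof -
  have "\<forall>i j u v. i < j \<and> j < length P \<and> u \<in> P ! i \<and> v \<in> P ! j \<longrightarrow> u < v"
    using assms(1) unfolding is_partition_def by (elim conjE) assumption
  then show ?thesis using assms(2-5) by blast
qed

lemma part_index_mono:
  assumes "is_partition G P" "u \<in> verts G" "v \<in> verts G" "u < v"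
  shows "part_index P u \<le> part_index P v"
proof (rule ccontr)
  assume "\<not> part_index P u \<le> part_index P v"
  then have "part_index P v < part_index P u" by simp
  from assms(1) this part_index(1)[OF assms(1,2)] part_index(2)[OF assms(1,3)]
    part_index(2)[OF assms(1,2)]
  have "v < u" by (rule is_partition_less)
  then show False using assms(4) by simp
qed

lemma part_index_ge_iff:
  assumes P: "is_partition G P" and i: "i < length P"
  shows "{v \<in> verts G. i \<le> part_index P v} = verts G \<inter> (\<Union>j\<in>{i..<length P}. P ! j)"
proof (intro equalityI subsetI)
  fix v assume "v \<in> {v \<in> verts G. i \<le> part_index P v}"
  then have "v \<in> verts G" "part_index P v \<in> {i..<length P}" using part_index(1)[OF P] by auto
  then show "v \<in> verts G \<inter> (\<Union>j\<in>{i..<length P}. P ! j)" using part_index(2)[OF P] by blast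
next
  fix v assume "v \<in> verts G \<inter> (\<Union>j\<in>{i..<length P}. P ! j)"
  then obtain j where "v \<in> verts G" "i \<le> j" "j < length P" "v \<in> P ! j" by auto
  then show "v \<in> {v \<in> verts G. i \<le> part_index P v}" using part_index_eq[OF P] by simp
qed

lemma part_index_eq_iff:
  assumes P: "is_partition G P" and i: "i < length P"
  shows "{v \<in> verts G. part_index P v = i} = P ! i"
proof -
  have "P ! i \<subseteq> verts G" using P i unfolding is_partition_def by (metis Union_upper nth_mem)
  then show ?thesis using part_index[OF P] part_index_eq[OF P i] by auto
qed

lemma geodesic_partition_fibre_layering:
  fixes f :: "nat \<Rightarrow> nat"
  assumes og: "is_ograph G" and gp: "geodesic_partition d G P"
    and sm: "strict_mono_on {0..<length P} f"
  shows "\<exists>L. geodesic_layering (induced G {v. h \<le> f (part_index P v)})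
               {v \<in> verts G. f (part_index P v) = h} L \<and>
             layering_width_le (induced G {v. f (part_index P v) = h}) L d"
proof -
  have P: "is_partition G P" using gp unfolding geodesic_partition_def by blast
  have idx: "part_index P v \<in> {0..<length P}" if "v \<in> verts G" for v
    using part_index(1)[OF P that] by simp
  show ?thesis
  proof (cases "h \<in> f ` {0..<length P}")
    case True
    then obtain i where i: "i < length P" "h = f i" by auto
    have "f (part_index P v) = h \<longleftrightarrow> part_index P v = i" if "v \<in> verts G" for v
      using strict_mono_on_eq[OF sm idx[OF that], of i] i by simp
    then have fibre: "{v \<in> verts G. f (part_index P v) = h} = P ! i"
      using part_index_eq_iff[OF P i(1)] by blast
    have "h \<le> f (part_index P v) \<longleftrightarrow> i \<le> part_index P v" if "v \<in> verts G" for v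
      using strict_mono_on_less_eq[OF sm _ idx[OF that], of i] i by simp
    then have "verts G \<inter> {v. h \<le> f (part_index P v)} = verts G \<inter> (\<Union>j\<in>{i..<length P}. P ! j)"
      using part_index_ge_iff[OF P i(1)] by blast
    then have up: "induced G {v. h \<le> f (part_index P v)} = induced G (\<Union>j\<in>{i..<length P}. P ! j)"
      by (rule induced_cong[OF og])
    have down: "induced G {v. f (part_index P v) = h} = induced G (P ! i)"
      using fibre by (intro induced_cong[OF og]) blast
    obtain L where "geodesic_layering (induced G (\<Union>j\<in>{i..<length P}. P ! j)) (P ! i) L"
      "layering_width_le (induced G (P ! i)) L d"
      using gp i(1) unfolding geodesic_partition_def by blast
    then show ?thesis unfolding up down fibre by blast
  next
    case False
    then have fibre: "{v \<in> verts G. f (part_index P v) = h} = {}" using idx by blast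
    then have "verts (induced G {v. f (part_index P v) = h}) = {}" by auto
    then have "layering_width_le (induced G {v. f (part_index P v) = h}) (\<lambda>_. 0) d"
      unfolding layering_width_le_def by simp
    moreover have "geodesic_layering H {} (\<lambda>_. 0)" for H
      by (simp add: geodesic_layering_def is_layering_def)
    ultimately show ?thesis unfolding fibre by blast
  qed
qed

lemma verts_quotient [simp]: "verts (quotient G P) = {0..<length P}"
  by (simp add: quotient_def verts_def)

lemma edges_quotient:
  "edges (quotient G P) = {{i, j} | i j. i < length P \<and> j < length P \<and> i \<noteq> j \<and>
     (\<exists>u\<in>P ! i. \<exists>v\<in>P ! j. {u, v} \<in> edges G)}"
  by (simp add: quotient_def edges_def)

lemma geodesic_partition_fibration:
  assumes og: "is_ograph G" and gp: "geodesic_partition d G P" and iso: "ord_iso (quotient G P) H"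
  shows "\<exists>\<phi>. geodesic_fibration d \<phi> G H"
proof -
  have P: "is_partition G P" using gp unfolding geodesic_partition_def by blast
  obtain f where bij: "bij_betw f {0..<length P} (verts H)" and sm: "strict_mono_on {0..<length P} f"
    and iso_edges: "\<forall>i\<in>{0..<length P}. \<forall>j\<in>{0..<length P}.
      {i, j} \<in> edges (quotient G P) \<longleftrightarrow> {f i, f j} \<in> edges H"
    using iso unfolding ord_iso_def verts_quotient by (elim exE conjE) (rule that; assumption)
  define \<phi> where "\<phi> v = f (part_index P v)" for v
  have "{\<phi> u, \<phi> v} \<in> edges H" if e: "{u, v} \<in> edges G" and ne: "\<phi> u \<noteq> \<phi> v" for u v
  proof -
    have uv: "u \<in> verts G" "v \<in> verts G" using is_ograph_edge_verts[OF og e] by auto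
    moreover have "part_index P u \<noteq> part_index P v" using ne unfolding \<phi>_def by auto
    ultimately have "{part_index P u, part_index P v} \<in> edges (quotient G P)"
      using e part_index[OF P uv(1)] part_index[OF P uv(2)] unfolding edges_quotient by blast
    then show ?thesis
      using iso_edges[rule_format, of "part_index P u" "part_index P v"]
        part_index(1)[OF P uv(1)] part_index(1)[OF P uv(2)]
      unfolding \<phi>_def by simp
  qed
  moreover have "\<phi> ` verts G \<subseteq> verts H"
    using bij_betw_imp_surj_on[OF bij] part_index(1)[OF P] unfolding \<phi>_def by fastforce
  moreover have "\<phi> u \<le> \<phi> v" if "u \<in> verts G" "v \<in> verts G" "u < v" for u v
    using strict_mono_on_less_eq[OF sm, of "part_index P u" "part_index P v"]
      part_index_mono[OF P that] part_index(1)[OF P that(1)] part_index(1)[OF P that(2)]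
    unfolding \<phi>_def by simp
  moreover have "\<exists>L. geodesic_layering (induced G {v. h \<le> \<phi> v}) {v \<in> verts G. \<phi> v = h} L \<and>
      layering_width_le (induced G {v. \<phi> v = h}) L d" for h
    unfolding \<phi>_def by (rule geodesic_partition_fibre_layering[OF og gp sm])
  ultimately show ?thesis unfolding geodesic_fibration_def by blast
qed

theorem mainTheorem5:
  fixes C :: "ograph set" and d :: nat
  assumes "\<forall>G\<in>C. is_ograph G"
    and "baker_class C"
    and "1 \<le> d"
  shows "baker_class (geo_closure C d)"
  \<comment> \<open>the argument works for every \<open>d\<close>\<close>
  unfolding baker_class_def
proof (intro allI impI)
  fix r :: "nat \<Rightarrow> nat" assume "\<forall>i. 0 < r i"
  then have "\<forall>i. 0 < simulation_seq d r i" unfolding simulation_seq_def by simp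
  then obtain t where t: "\<forall>H\<in>C. destroyer_wins t H (simulation_seq d r)"
    using assms(2) unfolding baker_class_def by blast
  have "destroyer_wins (simulation_rounds d t r) G r" if G: "G \<in> geo_closure C d" for G
  proof -
    obtain P H where og: "is_ograph G" and "geodesic_partition d G P" and H: "H \<in> C"
      and "ord_iso (quotient G P) H"
      using G unfolding geo_closure_def by blast
    then obtain \<phi> where "geodesic_fibration d \<phi> G H" by (metis geodesic_partition_fibration)
    moreover have "finite (verts H)" using assms(1) H is_ograph_finite by blast
    ultimately show ?thesis using t H by (intro destroyer_wins_simulation[OF _ og]) auto
  qed
  then show "\<exists>t. \<forall>G\<in>geo_closure C d. destroyer_wins t G r" by blast
qed

end
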